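(* For every integer $n\ge 3$ there exists a simple hamiltonian graph on $n$ vertices with maximum degree at most $3$, diameter at most $2\lfloor\log_2 n\rfloor$, and at most $\bigl\lfloor \tfrac{11n}{8}+\tfrac{3}{4}\bigr\rfloor$ edges.
   Context: A graph is hamiltonian if it contains a cycle passing through every vertex exactly once. The diameter of a graph is the maximum over pairs of vertices of their graph distance. *)

theory Defs
  imports Complex_Main
begin

definition simple_graph :: "'a set \<Rightarrow> 'a set set \<Rightarrow> bool" where
  "simple_graph V E \<longleftrightarrow> finite V \<and> (\<forall>e\<in>E. e \<subseteq> V \<and> card e = 2)"

definition adj :: "'a set set \<Rightarrow> 'a \<Rightarrow> 'a \<Rightarrow> bool" where
  "adj E u v \<longleftrightarrow> {u, v} \<in> E"

definition degree :: "'a set set \<Rightarrow> 'a \<Rightarrow> nat" where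
  "degree E v = card {e \<in> E. v \<in> e}"

definition is_walk :: "'a set set \<Rightarrow> 'a list \<Rightarrow> bool" where
  "is_walk E p \<longleftrightarrow> p \<noteq> [] \<and> (\<forall>i. Suc i < length p \<longrightarrow> adj E (p ! i) (p ! Suc i))"

definition dist_le :: "'a set set \<Rightarrow> 'a \<Rightarrow> 'a \<Rightarrow> nat \<Rightarrow> bool" where
  "dist_le E u v d \<longleftrightarrow> (\<exists>p. is_walk E p \<and> hd p = u \<and> last p = v \<and> length p \<le> Suc d)"

definition diameter_le :: "'a set \<Rightarrow> 'a set set \<Rightarrow> nat \<Rightarrow> bool" where
  "diameter_le V E d \<longleftrightarrow> (\<forall>u\<in>V. \<forall>v\<in>V. dist_le E u v d)"

definition hamiltonian :: "'a set \<Rightarrow> 'a set set \<Rightarrow> bool" where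
  "hamiltonian V E \<longleftrightarrow> (\<exists>c. distinct c \<and> set c = V \<and> 3 \<le> length c \<and>
      is_walk E c \<and> adj E (last c) (hd c))"

end

theory Submission
  imports Defs
begin

(* The graph on {0..<n} is the Hamiltonian cycle 0, 1, ..., n-1 together with a
   matching of chords, so it is simple, Hamiltonian and subcubic.  The chords embed a binary tree
   of depth floor(log2 n) into the path 0, ..., n-1: a segment of length n >= 3 with a designated
   root is cut into a left part of length n div 2, a right part of length (n-1) div 2 and one
   further vertex, and the root is joined to the roots of both parts, either by a path edge or by
   a chord.  To make this work the root must sit at the left end, in the middle, or at the right
   end of its segment, giving three mutually recursive kinds of segments.  The main theorem uses the middle-rooted segment of length n: all vertices are within
   floor(log2 n) of the middle vertex, hence the diameter bound, and the edge count is at most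
   n + (3n - 5)/8 <= 11n/8 + 3/4. *)

section \<open>Segments with a root and their chords\<close>

datatype root_pos = Left | Mid | Right

fun root :: "root_pos \<Rightarrow> nat \<Rightarrow> nat" where
  "root Left n = 0"
| "root Mid n = n div 2"
| "root Right n = n - 1"

definition shift :: "nat \<Rightarrow> nat set set \<Rightarrow> nat set set" where
  "shift k M = (\<lambda>e. (+) k ` e) ` M"

text \<open>A segment of length
  n \<ge> 3 consists of a part of length n div 2, a part of length (n - 1) div 2, and one more vertex:
  \<^item> Mid: left part (root at its right end), the root n div 2, right part (root at its left end),
    both parts joined to the root by path edges;
  \<^item> Right: left part (root in the middle, joined by a chord), right part (root at its right end,
    joined by a path edge), the root n - 1;
  \<^item> Left: the root 0, left part (root at its left end, joined by a path edge), right part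
    (root in the middle, joined by a chord).\<close>
fun chords :: "root_pos \<Rightarrow> nat \<Rightarrow> nat set set" where
  "chords k n = (if n \<le> 2 then {} else (case k of
     Mid \<Rightarrow> chords Right (n div 2) \<union> shift (n div 2 + 1) (chords Left ((n - 1) div 2))
   | Right \<Rightarrow> chords Mid (n div 2) \<union> shift (n div 2) (chords Right ((n - 1) div 2))
              \<union> {{root Mid (n div 2), n - 1}}
   | Left \<Rightarrow> shift 1 (chords Left (n div 2)) \<union> shift (n div 2 + 1) (chords Mid ((n - 1) div 2))
              \<union> {{0, n div 2 + 1 + root Mid ((n - 1) div 2)}}))"

declare chords.simps [simp del]

lemma chords_small: "n \<le> 2 \<Longrightarrow> chords k n = {}"
  by (subst chords.simps) simp

lemma chords_Mid: "3 \<le> n \<Longrightarrow>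
    chords Mid n = chords Right (n div 2) \<union> shift (n div 2 + 1) (chords Left ((n - 1) div 2))"
  by (subst chords.simps) simp

lemma chords_Right: "3 \<le> n \<Longrightarrow>
    chords Right n = chords Mid (n div 2) \<union> shift (n div 2) (chords Right ((n - 1) div 2))
                     \<union> {{root Mid (n div 2), n - 1}}"
  by (subst chords.simps) simp

lemma chords_Left: "3 \<le> n \<Longrightarrow>
    chords Left n = shift 1 (chords Left (n div 2)) \<union> shift (n div 2 + 1) (chords Mid ((n - 1) div 2))
                    \<union> {{0, n div 2 + 1 + root Mid ((n - 1) div 2)}}"
  by (subst chords.simps) simp

lemma halves:
  fixes n :: nat assumes "3 \<le> n"
  shows "n div 2 < n" "(n - 1) div 2 < n" "1 \<le> (n - 1) div 2" "(n - 1) div 2 \<le> n div 2"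
        "n div 2 + (n - 1) div 2 + 1 = n" "n div 2 div 2 < n div 2" "(n - 1) div 2 div 2 < (n - 1) div 2"
  using assms by presburger+

lemma shift_Un: "shift k (A \<union> B) = shift k A \<union> shift k B"
  by (simp add: shift_def image_Un)

lemma shift_0 [simp]: "shift 0 M = M"
  by (simp add: shift_def)

lemma mem_shift: "e \<in> shift k M \<longleftrightarrow> (\<exists>e'\<in>M. e = (+) k ` e')"
  by (auto simp: shift_def)

lemma card_shift_le: "finite M \<Longrightarrow> card (shift k M) \<le> card M"
  by (simp add: shift_def card_image_le)

subsection \<open>The chords form a matching\<close>

definition edges_on :: "nat \<Rightarrow> nat set set \<Rightarrow> bool" where
  "edges_on n M \<longleftrightarrow> finite M \<and> (\<forall>e\<in>M. \<exists>a b. e = {a, b} \<and> a < b \<and> b < n)"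

definition matching :: "nat set set \<Rightarrow> bool" where
  "matching M \<longleftrightarrow> (\<forall>e\<in>M. \<forall>e'\<in>M. e \<noteq> e' \<longrightarrow> e \<inter> e' = {})"

lemma edges_on_pair: "edges_on n M \<Longrightarrow> e \<in> M \<Longrightarrow> e \<subseteq> {0..<n} \<and> card e = 2"
  unfolding edges_on_def by force

lemma edges_on_shift: "edges_on m M \<Longrightarrow> k + m \<le> n \<Longrightarrow> edges_on n (shift k M)"
  unfolding edges_on_def mem_shift by (auto simp: shift_def) fastforce

lemma edges_on_Un: "edges_on n A \<Longrightarrow> edges_on n B \<Longrightarrow> edges_on n (A \<union> B)"
  unfolding edges_on_def by blast

lemma edges_on_single: "a < b \<Longrightarrow> b < n \<Longrightarrow> edges_on n {{a, b}}"
  unfolding edges_on_def by blast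

lemma chords_edges_on: "edges_on n (chords k n)"
proof (induction n arbitrary: k rule: less_induct)
  case (less n)
  show ?case
  proof (cases "n \<le> 2")
    case True
    then show ?thesis by (simp add: chords_small edges_on_def)
  next
    case False
    then have n: "3 \<le> n" by simp
    note h = halves[OF n]
    have IH1: "edges_on n (shift j (chords k' (n div 2)))" if "j + n div 2 \<le> n" for j k'
      using edges_on_shift[OF less.IH[OF h(1)] that] .
    have IH2: "edges_on n (shift j (chords k' ((n - 1) div 2)))" if "j + (n - 1) div 2 \<le> n" for j k'
      using edges_on_shift[OF less.IH[OF h(2)] that] .
    show ?thesis
    proof (cases k)
      case Left
      show ?thesis unfolding Left chords_Left[OF n] root.simps
        by (intro edges_on_Un edges_on_single IH1 IH2) (use h in linarith)+
    next
      case Mid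
      have "edges_on n (chords Right (n div 2))"
        using IH1[of 0 Right] h by simp
      then show ?thesis unfolding Mid chords_Mid[OF n]
        by (intro edges_on_Un IH2) (use h in linarith)+
    next
      case Right
      have "edges_on n (chords Mid (n div 2))"
        using IH1[of 0 Mid] h by simp
      then show ?thesis unfolding Right chords_Right[OF n] root.simps
        by (intro edges_on_Un edges_on_single IH2) (use h in linarith)+
    qed
  qed
qed

text \<open>Vertices of chords of (shifted) sub-segments lie in the range of that sub-segment; this is
  what keeps the chords of different parts disjoint.\<close>
lemma vertex_of_chord: "e \<in> chords k m \<Longrightarrow> x \<in> e \<Longrightarrow> x < m"
  using chords_edges_on[of m k] unfolding edges_on_def by fastforce

lemma vertex_of_shifted_chord: "e \<in> shift j (chords k m) \<Longrightarrow> x \<in> e \<Longrightarrow> j \<le> x \<and> x < j + m"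
  using vertex_of_chord unfolding mem_shift by fastforce

text \<open>The middle root is not covered by a chord: the chords of a Mid segment live in its two
  parts.  This is what allows the parent segment to add a chord at this vertex.\<close>
lemma mid_root_uncovered: "root Mid n \<notin> \<Union>(chords Mid n)"
proof (cases "n \<le> 2")
  case True
  then show ?thesis by (simp add: chords_small)
next
  case False
  then show ?thesis
    by (auto simp: chords_Mid dest: vertex_of_chord vertex_of_shifted_chord)
qed

lemma matching_Un: "matching A \<Longrightarrow> matching B \<Longrightarrow> \<Union>A \<inter> \<Union>B = {} \<Longrightarrow> matching (A \<union> B)"
  unfolding matching_def by blast

lemma matching_single: "matching {e}"
  unfolding matching_def by blast

lemma matching_shift:
  assumes "matching M" shows "matching (shift k M)"
  unfolding matching_def
proof (intro ballI impI)
  fix e e' assume "e \<in> shift k M" "e' \<in> shift k M" "e \<noteq> e'"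
  then obtain x y where "x \<in> M" "y \<in> M" "x \<noteq> y" "e = (+) k ` x" "e' = (+) k ` y"
    unfolding mem_shift by blast
  with assms show "e \<inter> e' = {}"
    unfolding matching_def by (simp add: image_Int [symmetric])
qed

lemma chords_matching: "matching (chords k n)"
proof (induction n arbitrary: k rule: less_induct)
  case (less n)
  show ?case
  proof (cases "n \<le> 2")
    case True
    then show ?thesis by (simp add: chords_small matching_def)
  next
    case False
    then have n: "3 \<le> n" by simp
    note h = halves[OF n]
    have IH: "matching (chords k' (n div 2))" "matching (chords k' ((n - 1) div 2))" for k'
      using less.IH h by auto
    show ?thesis
    proof (cases k)
      case Left
      have "root Mid ((n - 1) div 2) \<notin> \<Union>(chords Mid ((n - 1) div 2))"
        by (rule mid_root_uncovered)
      then have "n div 2 + 1 + root Mid ((n - 1) div 2) \<notin> \<Union>(shift (n div 2 + 1) (chords Mid ((n - 1) div 2)))"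
        by (auto simp: mem_shift)
      then show ?thesis unfolding Left chords_Left[OF n]
        by (intro matching_Un matching_shift matching_single IH)
           (use h in \<open>auto dest!: vertex_of_shifted_chord\<close>)
    next
      case Mid
      show ?thesis unfolding Mid chords_Mid[OF n]
        by (intro matching_Un matching_shift IH)
           (use h in \<open>auto dest!: vertex_of_shifted_chord vertex_of_chord\<close>)
    next
      case Right
      have "root Mid (n div 2) \<notin> \<Union>(chords Mid (n div 2))"
        by (rule mid_root_uncovered)
      then show ?thesis unfolding Right chords_Right[OF n]
        by (intro matching_Un matching_shift matching_single IH)
           (use h in \<open>auto dest!: vertex_of_shifted_chord vertex_of_chord\<close>)
    qed
  qed
qed

subsection \<open>Counting chords\<close>

lemma finite_chords: "finite (chords k n)"
  using chords_edges_on unfolding edges_on_def by blast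

lemma card_shifted_chords_le:
  "card (shift i (chords k m) \<union> shift j (chords k' m')) \<le> card (chords k m) + card (chords k' m')"
  using card_Un_le[of "shift i (chords k m)" "shift j (chords k' m')"]
    card_shift_le[OF finite_chords, of i k m] card_shift_le[OF finite_chords, of j k' m']
  by linarith

lemma card_chords_step:
  assumes n: "3 \<le> n"
  shows "card (chords Mid n) \<le> card (chords Right (n div 2)) + card (chords Left ((n - 1) div 2))"
    and "card (chords Right n) \<le> card (chords Mid (n div 2)) + card (chords Right ((n - 1) div 2)) + 1"
    and "card (chords Left n) \<le> card (chords Left (n div 2)) + card (chords Mid ((n - 1) div 2)) + 1"
proof -
  have plus_chord: "card (X \<union> {e}) \<le> card X + 1" for X :: "nat set set" and e
    using card_Un_le[of X "{e}"] by simp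
  show "card (chords Mid n) \<le> card (chords Right (n div 2)) + card (chords Left ((n - 1) div 2))"
    using card_shifted_chords_le[of 0 Right "n div 2" "n div 2 + 1" Left "(n - 1) div 2"]
    by (simp add: chords_Mid[OF n])
  show "card (chords Right n) \<le> card (chords Mid (n div 2)) + card (chords Right ((n - 1) div 2)) + 1"
    using card_shifted_chords_le[of 0 Mid "n div 2" "n div 2" Right "(n - 1) div 2"]
      plus_chord[of "chords Mid (n div 2) \<union> shift (n div 2) (chords Right ((n - 1) div 2))"
                  "{root Mid (n div 2), n - 1}"]
    unfolding chords_Right[OF n] shift_0 by linarith
  show "card (chords Left n) \<le> card (chords Left (n div 2)) + card (chords Mid ((n - 1) div 2)) + 1"
    using card_shifted_chords_le[of 1 Left "n div 2" "n div 2 + 1" Mid "(n - 1) div 2"]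
      plus_chord[of "shift 1 (chords Left (n div 2)) \<union> shift (n div 2 + 1) (chords Mid ((n - 1) div 2))"
                  "{0, n div 2 + 1 + root Mid ((n - 1) div 2)}"]
    unfolding chords_Left[OF n] by linarith
qed

text \<open>Chord count: a middle-rooted segment of length n \<ge> 2 has at most (3n - 5)/8 chords, every
  segment of length n \<ge> 1 at most (3n - 1)/8.  The stronger bound for Mid is what the Right
  and Left kinds need for their middle-rooted part.\<close>
lemma card_chords:
  "(2 \<le> n \<longrightarrow> 8 * card (chords Mid n) + 5 \<le> 3 * n) \<and> (\<forall>k. 1 \<le> n \<longrightarrow> 8 * card (chords k n) + 1 \<le> 3 * n)"
proof (induction n rule: less_induct)
  case (less n)
  show ?case
  proof (cases "n \<le> 2")
    case True
    then show ?thesis by (simp add: chords_small)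
  next
    case False
    then have n: "3 \<le> n" by simp
    note h = halves[OF n]
    define n1 n2 where "n1 = n div 2" and "n2 = (n - 1) div 2"
    have IH1: "8 * card (chords k n1) + 1 \<le> 3 * n1" "2 \<le> n1 \<Longrightarrow> 8 * card (chords Mid n1) + 5 \<le> 3 * n1" for k
      using less.IH[OF h(1)] h unfolding n1_def n2_def by auto
    have IH2: "8 * card (chords k n2) + 1 \<le> 3 * n2" "2 \<le> n2 \<Longrightarrow> 8 * card (chords Mid n2) + 5 \<le> 3 * n2" for k
      using less.IH[OF h(2)] h unfolding n1_def n2_def by auto
    note step = card_chords_step[OF n, folded n1_def n2_def]
    have sizes: "n1 + n2 + 1 = n" "n2 \<le> n1" "n1 \<le> n2 + 1" "1 \<le> n2"
      using h unfolding n1_def n2_def by linarith+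
    have Mid: "8 * card (chords Mid n) + 5 \<le> 3 * n"
      using step(1) IH1(1)[of Right] IH2(1)[of Left] sizes by linarith
    have Right: "8 * card (chords Right n) + 1 \<le> 3 * n"
    proof (cases "2 \<le> n1")
      case True
      then show ?thesis using step(2) IH1(2) IH2(1)[of Right] sizes by linarith
    next
      case False
      then have "n1 \<le> 2" "n2 \<le> 2" using sizes by linarith+
      then show ?thesis using step(2) n by (simp add: chords_small)
    qed
    have Left: "8 * card (chords Left n) + 1 \<le> 3 * n"
    proof (cases "2 \<le> n2")
      case True
      then show ?thesis using step(3) IH1(1)[of Left] IH2(2) sizes by linarith
    next
      case False
      then have "n1 \<le> 2" "n2 \<le> 2" using sizes by linarith+
      then show ?thesis using step(3) n by (simp add: chords_small)
    qed
    have "8 * card (chords k n) + 1 \<le> 3 * n" for k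
      using Left Mid Right by (cases k) simp_all
    with Mid show ?thesis by blast
  qed
qed

subsection \<open>Walks of bounded length\<close>

inductive walk_within :: "nat set set \<Rightarrow> nat \<Rightarrow> nat \<Rightarrow> nat \<Rightarrow> bool" for E where
  here: "walk_within E u u d"
| step: "adj E u w \<Longrightarrow> walk_within E w v d \<Longrightarrow> walk_within E u v (Suc d)"

lemma walk_within_mono: "walk_within E u v d \<Longrightarrow> d \<le> d' \<Longrightarrow> walk_within E u v d'"
proof (induction arbitrary: d' rule: walk_within.induct)
  case (here u d)
  show ?case by (rule walk_within.here)
next
  case (step u w v d)
  then obtain d'' where "d' = Suc d''" "d \<le> d''" by (cases d') auto
  with step show ?case by (auto intro: walk_within.step)
qed

lemma adj_sym: "adj E u v \<Longrightarrow> adj E v u"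
  by (simp add: adj_def insert_commute)

lemma walk_within_trans:
  "walk_within E u v a \<Longrightarrow> walk_within E v w b \<Longrightarrow> walk_within E u w (a + b)"
proof (induction arbitrary: w b rule: walk_within.induct)
  case (here u d)
  then show ?case using walk_within_mono by fastforce
next
  case (step u x v d)
  then show ?case by (auto intro: walk_within.step)
qed

lemma walk_within_sym: "walk_within E u v d \<Longrightarrow> walk_within E v u d"
proof (induction rule: walk_within.induct)
  case (here u d)
  show ?case by (rule walk_within.here)
next
  case (step u w v d)
  have "walk_within E w u 1"
    using adj_sym[OF step(1)] by (auto intro: walk_within.intros)
  from walk_within_trans[OF step(3) this] show ?case by simp
qed

lemma walk_within_embed:
  assumes "walk_within G u v d" "shift j G \<subseteq> E"
  shows "walk_within E (j + u) (j + v) d"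
  using assms(1)
proof (induction rule: walk_within.induct)
  case (here u d)
  show ?case by (rule walk_within.here)
next
  case (step u w v d)
  have "{j + u, j + w} \<in> shift j G"
    using step(1) unfolding adj_def mem_shift by (metis image_empty image_insert)
  with assms(2) have "adj E (j + u) (j + w)" by (auto simp: adj_def)
  then show ?case using step(3) by (rule walk_within.step)
qed

lemma walk_within_dist_le: "walk_within E u v d \<Longrightarrow> dist_le E u v d"
proof (induction rule: walk_within.induct)
  case (here u d)
  show ?case unfolding dist_le_def is_walk_def by (intro exI[of _ "[u]"]) simp
next
  case (step u w v d)
  then obtain p where p: "is_walk E p" "hd p = w" "last p = v" "length p \<le> Suc d"
    unfolding dist_le_def by blast
  have "is_walk E (u # p)"
    unfolding is_walk_def
  proof (intro conjI allI impI)
    fix i assume "Suc i < length (u # p)"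
    then show "adj E ((u # p) ! i) ((u # p) ! Suc i)"
      using p step(1) unfolding is_walk_def by (cases i) (auto simp: hd_conv_nth)
  qed simp
  with p show ?case
    unfolding dist_le_def by (intro exI[of _ "u # p"]) (auto simp: is_walk_def)
qed

definition radius_le :: "nat set set \<Rightarrow> nat \<Rightarrow> nat \<Rightarrow> nat \<Rightarrow> bool" where
  "radius_le E r m d \<longleftrightarrow> (\<forall>i<m. walk_within E r i d)"

lemma diameter_le_from_radius:
  assumes "radius_le E r n d"
  shows "diameter_le {0..<n} E (2 * d)"
  unfolding diameter_le_def
proof (intro ballI)
  fix u v assume "u \<in> {0..<n}" "v \<in> {0..<n}"
  with assms have "walk_within E r u d" "walk_within E r v d"
    unfolding radius_le_def by auto
  then have "walk_within E u v (d + d)"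
    by (blast intro: walk_within_trans walk_within_sym)
  then show "dist_le E u v (2 * d)"
    by (simp add: walk_within_dist_le mult_2)
qed

lemma radius_split:
  assumes "radius_le G1 r1 m1 d" "shift j1 G1 \<subseteq> E" "adj E c (j1 + r1)"
      and "radius_le G2 r2 m2 d" "shift j2 G2 \<subseteq> E" "adj E c (j2 + r2)"
      and "\<And>i. i < n \<Longrightarrow> i = c \<or> (j1 \<le> i \<and> i < j1 + m1) \<or> (j2 \<le> i \<and> i < j2 + m2)"
  shows "radius_le E c n (Suc d)"
  unfolding radius_le_def
proof (intro allI impI)
  have via: "walk_within E c (j + i) (Suc d)"
    if "radius_le G r m d" "shift j G \<subseteq> E" "adj E c (j + r)" "i < m" for G r m j i
    using that walk_within_embed[of G r i d j E]
    unfolding radius_le_def by (auto intro: walk_within.step)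
  fix i assume "i < n"
  then consider "i = c" | "j1 \<le> i" "i < j1 + m1" | "j2 \<le> i" "i < j2 + m2"
    using assms(7) by blast
  then show "walk_within E c i (Suc d)"
  proof cases
    case 1
    then show ?thesis by (simp add: walk_within.here)
  next
    case 2
    then show ?thesis using via[OF assms(1-3), of "i - j1"] by simp
  next
    case 3
    then show ?thesis using via[OF assms(4-6), of "i - j2"] by simp
  qed
qed

subsection \<open>Depth of the embedded tree\<close>

definition path_edges :: "nat \<Rightarrow> nat set set" where
  "path_edges n = {{i, Suc i} | i. Suc i < n}"

definition segment_edges :: "root_pos \<Rightarrow> nat \<Rightarrow> nat set set" where
  "segment_edges k n = path_edges n \<union> chords k n"

lemma shift_segment_edges:
  assumes "j + m \<le> n" "shift j (chords k' m) \<subseteq> chords k n"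
  shows "shift j (segment_edges k' m) \<subseteq> segment_edges k n"
proof -
  have "shift j (path_edges m) \<subseteq> path_edges n"
    using assms(1) unfolding path_edges_def shift_def by force
  with assms(2) show ?thesis
    unfolding segment_edges_def shift_Un by blast
qed

lemma adj_path: "Suc i < n \<Longrightarrow> adj (segment_edges k n) i (Suc i)"
  unfolding adj_def segment_edges_def path_edges_def by blast

lemma radius_base:
  assumes "n \<le> 2" "n < 2 ^ Suc d"
  shows "radius_le (segment_edges k n) (root k n) n d"
  unfolding radius_le_def
proof (intro allI impI)
  fix i assume "i < n"
  show "walk_within (segment_edges k n) (root k n) i d"
  proof (cases "i = root k n")
    case True
    then show ?thesis by (simp add: walk_within.here)
  next
    case False
    with \<open>i < n\<close> assms(1) have n: "n = 2" by (cases k) auto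
    with assms(2) obtain d' where d: "d = Suc d'" by (cases d) auto
    have "root k n < 2" using n by (cases k) auto
    with False \<open>i < n\<close> n have "root k n = 0 \<and> i = 1 \<or> root k n = 1 \<and> i = 0"
      by auto
    then have "adj (segment_edges k n) (root k n) i"
      using adj_path[of 0 n k] adj_sym[OF adj_path[of 0 n k]] n by auto
    then show ?thesis unfolding d by (blast intro: walk_within.intros)
  qed
qed

lemma radius_step:
  assumes n: "3 \<le> n"
    and IH1: "\<And>k'. radius_le (segment_edges k' (n div 2)) (root k' (n div 2)) (n div 2) d"
    and IH2: "\<And>k'. radius_le (segment_edges k' ((n - 1) div 2)) (root k' ((n - 1) div 2)) ((n - 1) div 2) d"
  shows "radius_le (segment_edges k n) (root k n) n (Suc d)"
proof -
  note h = halves[OF n]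
  let ?n1 = "n div 2" and ?n2 = "(n - 1) div 2"
  show ?thesis
  proof (cases k)
    case Left
    show ?thesis unfolding Left
    proof (rule radius_split[OF IH1 _ _ IH2])
      show "shift 1 (segment_edges Left ?n1) \<subseteq> segment_edges Left n"
        using h by (intro shift_segment_edges) (auto simp: chords_Left[OF n])
      show "shift (?n1 + 1) (segment_edges Mid ?n2) \<subseteq> segment_edges Left n"
        using h by (intro shift_segment_edges) (auto simp: chords_Left[OF n])
      show "adj (segment_edges Left n) (root Left n) (1 + root Left ?n1)"
        using adj_path[of 0 n] n by simp
      show "adj (segment_edges Left n) (root Left n) (?n1 + 1 + root Mid ?n2)"
        by (simp add: adj_def segment_edges_def chords_Left[OF n])
    qed (use h in auto)
  next
    case Mid
    show ?thesis unfolding Mid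
    proof (rule radius_split[OF IH1 _ _ IH2])
      show "shift 0 (segment_edges Right ?n1) \<subseteq> segment_edges Mid n"
        using h by (intro shift_segment_edges) (auto simp: chords_Mid[OF n])
      show "shift (?n1 + 1) (segment_edges Left ?n2) \<subseteq> segment_edges Mid n"
        using h by (intro shift_segment_edges) (auto simp: chords_Mid[OF n])
      show "adj (segment_edges Mid n) (root Mid n) (0 + root Right ?n1)"
        using adj_sym[OF adj_path[of "?n1 - 1" n Mid]] h by simp
      show "adj (segment_edges Mid n) (root Mid n) (?n1 + 1 + root Left ?n2)"
        using adj_path[of ?n1 n Mid] h by simp
    qed (use h in auto)
  next
    case Right
    show ?thesis unfolding Right
    proof (rule radius_split[OF IH1 _ _ IH2])
      show "shift 0 (segment_edges Mid ?n1) \<subseteq> segment_edges Right n"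
        using h by (intro shift_segment_edges) (auto simp: chords_Right[OF n])
      show "shift ?n1 (segment_edges Right ?n2) \<subseteq> segment_edges Right n"
        using h by (intro shift_segment_edges) (auto simp: chords_Right[OF n])
      show "adj (segment_edges Right n) (root Right n) (0 + root Mid ?n1)"
        by (simp add: adj_def segment_edges_def chords_Right[OF n] insert_commute)
      have "?n1 + root Right ?n2 = n - 2" unfolding root.simps using h(3,5) by linarith
      then show "adj (segment_edges Right n) (root Right n) (?n1 + root Right ?n2)"
        using adj_sym[OF adj_path[of "n - 2" n Right]] n by (simp add: Suc_diff_Suc numeral_2_eq_2)
    qed (use h in \<open>simp only: root.simps; linarith\<close>)
  qed
qed

lemma segment_radius: "n < 2 ^ Suc d \<Longrightarrow> radius_le (segment_edges k n) (root k n) n d"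
proof (induction n arbitrary: k d rule: less_induct)
  case (less n)
  show ?case
  proof (cases "n \<le> 2")
    case True
    then show ?thesis using less.prems by (rule radius_base)
  next
    case False
    then have n: "3 \<le> n" by simp
    note h = halves[OF n]
    from less.prems n obtain d' where d: "d = Suc d'" by (cases d) auto
    have "n div 2 < 2 ^ Suc d'" using less.prems d by simp
    moreover from this have "(n - 1) div 2 < 2 ^ Suc d'" using h by linarith
    ultimately show ?thesis unfolding d using less.IH h by (intro radius_step n) auto
  qed
qed

lemma radius_le_subgraph: "radius_le G r m d \<Longrightarrow> G \<subseteq> E \<Longrightarrow> radius_le E r m d"
  unfolding radius_le_def using walk_within_embed[where j = 0] by auto

subsection \<open>The Hamiltonian cycle\<close>

definition cycle_edges :: "nat \<Rightarrow> nat set set" where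
  "cycle_edges n = (\<lambda>i. {i, Suc i mod n}) ` {..<n}"

lemma cycle_edge_is_pair: "2 \<le> n \<Longrightarrow> e \<in> cycle_edges n \<Longrightarrow> e \<subseteq> {0..<n} \<and> card e = 2"
proof -
  assume n: "2 \<le> n" and "e \<in> cycle_edges n"
  then obtain i where i: "i < n" "e = {i, Suc i mod n}" unfolding cycle_edges_def by blast
  have "i \<noteq> Suc i mod n"
  proof (cases "Suc i < n")
    case False
    with i have "Suc i = n" by simp
    with n show ?thesis by auto
  qed simp
  with i n show ?thesis by auto
qed

lemma card_cycle_edges: "card (cycle_edges n) \<le> n"
  unfolding cycle_edges_def using card_image_le[of "{..<n}"] by simp

lemma path_edges_sub_cycle: "path_edges n \<subseteq> cycle_edges n"
  unfolding path_edges_def cycle_edges_def by force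

lemma degree_cycle_edges: "degree (cycle_edges n) v \<le> 2"
proof -
  have "{e \<in> cycle_edges n. v \<in> e} \<subseteq> {{v, Suc v mod n}, {(v + n - 1) mod n, v}}"
  proof
    fix e assume "e \<in> {e \<in> cycle_edges n. v \<in> e}"
    then obtain i where i: "i < n" "e = {i, Suc i mod n}" "v = i \<or> v = Suc i mod n"
      unfolding cycle_edges_def by auto
    have "i = (v + n - 1) mod n" if "v = Suc i mod n"
    proof (cases "Suc i < n")
      case False
      with i(1) have "Suc i = n" by simp
      with that show ?thesis by simp
    qed (use that i(1) in simp)
    with i show "e \<in> {{v, Suc v mod n}, {(v + n - 1) mod n, v}}" by auto
  qed
  then have "degree (cycle_edges n) v \<le> card {{v, Suc v mod n}, {(v + n - 1) mod n, v}}"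
    unfolding degree_def by (intro card_mono) auto
  also have "\<dots> \<le> 2" by (simp add: card_insert_if)
  finally show ?thesis .
qed

lemma hamiltonian_cycle_edges:
  assumes "3 \<le> n" "cycle_edges n \<subseteq> E"
  shows "hamiltonian {0..<n} E"
  unfolding hamiltonian_def
proof (intro exI[of _ "[0..<n]"] conjI)
  show "is_walk E [0..<n]"
    unfolding is_walk_def
  proof (intro conjI allI impI)
    fix i assume "Suc i < length [0..<n]"
    then have "{i, Suc i} \<in> cycle_edges n" using path_edges_sub_cycle unfolding path_edges_def by auto
    with assms(2) \<open>Suc i < length [0..<n]\<close> show "adj E ([0..<n] ! i) ([0..<n] ! Suc i)"
      by (auto simp: adj_def simp del: upt_Suc)
  qed (use assms in simp)
  have "{n - 1, Suc (n - 1) mod n} \<in> cycle_edges n"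
    unfolding cycle_edges_def using assms(1) by auto
  then show "adj E (last [0..<n]) (hd [0..<n])"
    using assms by (auto simp: adj_def)
qed (use assms in auto)

lemma degree_add_matching:
  assumes "finite M" "matching M"
  shows "degree (A \<union> M) v \<le> degree A v + 1"
proof -
  have "card {e \<in> M. v \<in> e} \<le> 1"
    using assms card_le_Suc0_iff_eq[of "{e \<in> M. v \<in> e}"] unfolding matching_def by auto
  moreover have "{e \<in> A \<union> M. v \<in> e} = {e \<in> A. v \<in> e} \<union> {e \<in> M. v \<in> e}" by blast
  ultimately show ?thesis
    unfolding degree_def using card_Un_le[of "{e \<in> A. v \<in> e}" "{e \<in> M. v \<in> e}"] by simp
qed

lemma floor_log2_bound: "1 \<le> n \<Longrightarrow> n < 2 ^ Suc (nat \<lfloor>log 2 (real n)\<rfloor>)"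
proof -
  assume n: "1 \<le> n"
  then have "\<lfloor>log 2 (real n)\<rfloor> = int (nat \<lfloor>log 2 (real n)\<rfloor>)" by simp
  then show ?thesis
    using floor_log_nat_eq_powr_iff[of 2 n "nat \<lfloor>log 2 (real n)\<rfloor>"] n by simp
qed

text \<open>The cycle contributes n edges, the chords at most (3n - 5)/8.\<close>
lemma edge_count_bound:
  fixes n c :: nat
  assumes "8 * c + 5 \<le> 3 * n"
  shows "n + c \<le> nat \<lfloor>11 * real n / 8 + 3 / 4\<rfloor>"
proof (rule le_nat_floor)
  from assms have "real (8 * c + 5) \<le> real (3 * n)" by linarith
  then show "real (n + c) \<le> 11 * real n / 8 + 3 / 4" by simp
qed

theorem mainTheorem6:
  fixes n :: nat
  assumes "n \<ge> 3"
  shows "\<exists>E :: nat set set.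
           simple_graph {0..<n} E \<and>
           hamiltonian {0..<n} E \<and>
           (\<forall>v\<in>{0..<n}. degree E v \<le> 3) \<and>
           diameter_le {0..<n} E (2 * nat \<lfloor>log 2 (real n)\<rfloor>) \<and>
           card E \<le> nat \<lfloor>11 * real n / 8 + 3 / 4\<rfloor>"
proof (intro exI conjI)
  let ?M = "chords Mid n" and ?E = "cycle_edges n \<union> chords Mid n"
  have "e \<subseteq> {0..<n} \<and> card e = 2" if "e \<in> ?E" for e
    using that cycle_edge_is_pair[of n e] edges_on_pair[OF chords_edges_on[of n Mid], of e] assms by auto
  then show "simple_graph {0..<n} ?E"
    unfolding simple_graph_def by blast
  show "hamiltonian {0..<n} ?E"
    using assms by (intro hamiltonian_cycle_edges) auto
  show "\<forall>v\<in>{0..<n}. degree ?E v \<le> 3"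
  proof
    fix v
    have "degree ?E v \<le> degree (cycle_edges n) v + 1"
      by (rule degree_add_matching[OF finite_chords chords_matching])
    with degree_cycle_edges[of n v] show "degree ?E v \<le> 3" by linarith
  qed
  have "radius_le (segment_edges Mid n) (root Mid n) n (nat \<lfloor>log 2 (real n)\<rfloor>)"
    using assms by (intro segment_radius floor_log2_bound) simp
  moreover have "segment_edges Mid n \<subseteq> ?E"
    using path_edges_sub_cycle unfolding segment_edges_def by blast
  ultimately show "diameter_le {0..<n} ?E (2 * nat \<lfloor>log 2 (real n)\<rfloor>)"
    by (rule diameter_le_from_radius[OF radius_le_subgraph])
  have "card ?E \<le> n + card ?M"
    using card_Un_le[of "cycle_edges n" ?M] card_cycle_edges[of n] by linarith
  also have "\<dots> \<le> nat \<lfloor>11 * real n / 8 + 3 / 4\<rfloor>"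
    using card_chords[of n] assms by (intro edge_count_bound) simp
  finally show "card ?E \<le> nat \<lfloor>11 * real n / 8 + 3 / 4\<rfloor>" .
qed

end
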